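(* Let $s(x)\in\Omega$ be a generalized power series with $\dim_{\mathbb{Q}}\langle\operatorname{supp}s(x)\rangle>n$. Then $s(x)$ is not a solution of any nontrivial equation $P=0$ of order $n$ with constant coefficients, i.e. there is no non-zero $P\in\mathbb{C}[y_0,\ldots,y_n]$ with $P(s(x),s'(x),\ldots,s^{(n)}(x))=0$.
   Context: $\Omega$ denotes the field of generalized power series $s(x)=\sum_{i\ge1}c_i x^{\mu_i}$ with $c_i\in\mathbb{C}$, $\mu_i\in\mathbb{R}$, $\mu_1<\mu_2<\cdots$ and $\mu_i\to\infty$ when there are infinitely many terms; $\operatorname{supp}s=\{\mu_i:c_i\ne0\}$. For $E\subset\mathbb{R}$, $\langle E\rangle$ is the $\mathbb{Q}$-linear span of $E$ in $\mathbb{R}$. The operator $'$ is one fixed choice among: (a) ordinary derivative $\frac{d}{dx}$; (b) Euler derivative $x\frac{d}{dx}$; (c) $q$-difference operator $s'(x)=s(qx)$, i.e. $\sum c_ix^{\mu_i}\mapsto\sum c_iq^{\mu_i}x^{\mu_i}$, for fixed $q\in\mathbb{C}$, $|q|\ne1$. $s^{(\kappa)}$ is the $\kappa$-th iterate of $'$. *)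

theory Defs
  imports "HOL-Analysis.Analysis"
begin

text \<open>A generalized power series sum c_i x^mu_i is represented by its coefficient
  function c :: real => complex (coefficient of x^mu).  The conditions
  mu_1 < mu_2 < ... and mu_i -> infinity (if infinitely many terms) say exactly that
  the support meets every half-line (-inf, M] in a finite set.\<close>

type_synonym gps = "real \<Rightarrow> complex"

definition gps_supp :: "gps \<Rightarrow> real set" where
  "gps_supp s = {\<mu>. s \<mu> \<noteq> 0}"

definition is_gps :: "gps \<Rightarrow> bool" where
  "is_gps s \<longleftrightarrow> (\<forall>M. finite {\<mu> \<in> gps_supp s. \<mu> \<le> M})"

definition gps_one :: gps where
  "gps_one = (\<lambda>\<mu>. if \<mu> = 0 then 1 else 0)"

definition gps_times :: "gps \<Rightarrow> gps \<Rightarrow> gps" where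
  "gps_times a b = (\<lambda>\<mu>. \<Sum>\<alpha> \<in> {\<alpha> \<in> gps_supp a. \<mu> - \<alpha> \<in> gps_supp b}. a \<alpha> * b (\<mu> - \<alpha>))"

definition gps_pow :: "gps \<Rightarrow> nat \<Rightarrow> gps" where
  "gps_pow a k = (gps_times a ^^ k) gps_one"

datatype opkind = Deriv | Euler | QDiff complex

definition gps_op :: "opkind \<Rightarrow> gps \<Rightarrow> gps" where
  "gps_op k s = (case k of
      Deriv \<Rightarrow> (\<lambda>\<mu>. complex_of_real (\<mu> + 1) * s (\<mu> + 1))
    | Euler \<Rightarrow> (\<lambda>\<mu>. complex_of_real \<mu> * s \<mu>)
    | QDiff q \<Rightarrow> (\<lambda>\<mu>. q powr complex_of_real \<mu> * s \<mu>))"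

definition admissible_op :: "opkind \<Rightarrow> bool" where
  "admissible_op k \<longleftrightarrow> (\<forall>q. k = QDiff q \<longrightarrow> q \<noteq> 0 \<and> norm q \<noteq> 1)"

text \<open>Polynomials in y_0..y_n with complex coefficients: coefficient function on
  exponent vectors (lists of length n+1), finitely supported.\<close>

definition is_poly_order :: "nat \<Rightarrow> (nat list \<Rightarrow> complex) \<Rightarrow> bool" where
  "is_poly_order n P \<longleftrightarrow> finite {\<alpha>. P \<alpha> \<noteq> 0} \<and> (\<forall>\<alpha>. P \<alpha> \<noteq> 0 \<longrightarrow> length \<alpha> = Suc n)"

definition gps_monomial :: "opkind \<Rightarrow> gps \<Rightarrow> nat list \<Rightarrow> gps" where
  "gps_monomial k s \<alpha> =
     foldr (\<lambda>i acc. gps_times (gps_pow ((gps_op k ^^ i) s) (\<alpha> ! i)) acc) [0..<length \<alpha>] gps_one"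

definition gps_eval :: "opkind \<Rightarrow> (nat list \<Rightarrow> complex) \<Rightarrow> gps \<Rightarrow> gps" where
  "gps_eval k P s = (\<lambda>\<mu>. \<Sum>\<alpha> \<in> {\<alpha>. P \<alpha> \<noteq> 0}. P \<alpha> * gps_monomial k s \<alpha> \<mu>)"

definition rat_indep :: "real set \<Rightarrow> bool" where
  "rat_indep B \<longleftrightarrow> (\<forall>r :: real \<Rightarrow> rat. (\<Sum>b\<in>B. real_of_rat (r b) * b) = 0 \<longrightarrow> (\<forall>b\<in>B. r b = 0))"

definition qdim_gt :: "real set \<Rightarrow> nat \<Rightarrow> bool" where
  "qdim_gt E n \<longleftrightarrow> (\<exists>B \<subseteq> E. finite B \<and> card B = Suc n \<and> rat_indep B)"

end

theory Submission
  imports Defs "HOL-Computational_Algebra.Polynomial"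
begin

text \<open>
  A derivation \<delta> of the ring of generalized power series that commutes with the operator turns
  P(s, s', ..., s^(n)) = 0 into the linear relation \<Sum>_j (\<partial>P/\<partial>y_j)(s, ..., s^(n)) (\<delta> s)^(j) = 0;
  by induction on the degree of P, some coefficient of this relation is nonzero. Comparing the
  lowest-order terms, the order \<mu> of \<delta> s must be a root of an indicial equation, which is a
  nonzero polynomial of degree at most n in \<mu> or q^\<mu>; as |q| \<noteq> 1 this allows at most n orders.
  On the other hand, the derivations multiplying the coefficient of x^\<mu> by \<phi> \<mu>, for additive
  \<phi> vanishing on the exponent shift of the operator, realize every exponent of s that is
  Q-independent of the smaller ones as such an order. Together with the shift these exponents
  Q-span supp s, so there are more than n of them (for d/dx, whose shift 1 takes up one
  dimension, the order of s' itself supplies the missing one).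
\<close>

section \<open>The ring of generalized power series\<close>

lemma gps_supp_iff [simp]: "\<mu> \<in> gps_supp s \<longleftrightarrow> s \<mu> \<noteq> 0"
  by (simp add: gps_supp_def)

lemma finite_lower_sections_has_least:
  fixes A :: "real set"
  assumes fin: "\<And>M. finite {\<mu> \<in> A. \<mu> \<le> M}" and "x \<in> A"
  shows "\<exists>m\<in>A. \<forall>\<mu>\<in>A. m \<le> \<mu>"
proof -
  let ?S = "{\<mu> \<in> A. \<mu> \<le> x}"
  have S: "finite ?S" "?S \<noteq> {}" using fin \<open>x \<in> A\<close> by auto
  show ?thesis
  proof (intro bexI ballI)
    show "Min ?S \<in> A" using Min_in[OF S] by simp
    show "Min ?S \<le> \<mu>" if "\<mu> \<in> A" for \<mu>
      using that Min_le[OF S(1)] Min_in[OF S] by (cases "\<mu> \<le> x") auto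
  qed
qed

lemma gps_has_least:
  assumes "is_gps a" "\<mu> \<in> gps_supp a"
  shows "\<exists>m\<in>gps_supp a. \<forall>\<mu>\<in>gps_supp a. m \<le> \<mu>"
  using finite_lower_sections_has_least assms unfolding is_gps_def by blast

lemma gps_bounded_below:
  assumes "is_gps a"
  obtains m where "\<And>\<mu>. a \<mu> \<noteq> 0 \<Longrightarrow> m \<le> \<mu>"
proof (cases "gps_supp a = {}")
  case False
  then obtain \<mu> where "\<mu> \<in> gps_supp a" by blast
  with gps_has_least[OF assms] obtain m where m: "\<forall>\<mu>\<in>gps_supp a. m \<le> \<mu>" by blast
  show ?thesis by (rule that[of m]) (use m in auto)
qed (rule that[of 0], auto simp: gps_supp_def)

lemma gps_finite_le:
  assumes "is_gps a" shows "finite {\<mu>. a \<mu> \<noteq> 0 \<and> \<mu> \<le> M}"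
  using assms unfolding is_gps_def by simp

lemma is_gps_supp_mono:
  assumes "is_gps a" "\<And>\<mu>. b \<mu> \<noteq> 0 \<Longrightarrow> a \<mu> \<noteq> 0" shows "is_gps b"
  unfolding is_gps_def
  by (intro allI finite_subset[OF _ gps_finite_le[OF assms(1)]]) (auto simp: assms(2))

lemma is_gps_zero: "is_gps (\<lambda>_. 0)"
  by (simp add: is_gps_def gps_supp_def)

lemma is_gps_one: "is_gps gps_one"
  by (simp add: is_gps_def gps_supp_def gps_one_def)

lemma is_gps_scale: "is_gps a \<Longrightarrow> is_gps (\<lambda>\<mu>. c \<mu> * a \<mu>)"
  by (rule is_gps_supp_mono) auto

lemma is_gps_add:
  assumes "is_gps a" "is_gps b" shows "is_gps (\<lambda>\<mu>. a \<mu> + b \<mu>)"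
proof -
  have "{\<mu> \<in> gps_supp (\<lambda>\<mu>. a \<mu> + b \<mu>). \<mu> \<le> M}
      \<subseteq> {\<mu>. a \<mu> \<noteq> 0 \<and> \<mu> \<le> M} \<union> {\<mu>. b \<mu> \<noteq> 0 \<and> \<mu> \<le> M}" for M
    by auto
  then show ?thesis
    unfolding is_gps_def using gps_finite_le assms by (meson finite_Un finite_subset)
qed

lemma is_gps_shift:
  assumes "is_gps s" shows "is_gps (\<lambda>\<mu>. w \<mu> * s (\<mu> + t))"
  unfolding is_gps_def
proof
  fix M
  have "{\<mu> \<in> gps_supp (\<lambda>\<mu>. w \<mu> * s (\<mu> + t)). \<mu> \<le> M} \<subseteq> (\<lambda>x. x - t) ` {x. s x \<noteq> 0 \<and> x \<le> M + t}"
    by (auto intro!: image_eqI[where x="_ + t"])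
  then show "finite {\<mu> \<in> gps_supp (\<lambda>\<mu>. w \<mu> * s (\<mu> + t)). \<mu> \<le> M}"
    using gps_finite_le[OF assms] finite_subset by blast
qed

lemma finite_convolution_support:
  assumes "is_gps a" "is_gps b"
  shows "finite {\<alpha> \<in> gps_supp a. \<mu> - \<alpha> \<in> gps_supp b}"
proof -
  obtain mb where "\<And>\<beta>. b \<beta> \<noteq> 0 \<Longrightarrow> mb \<le> \<beta>" using gps_bounded_below[OF assms(2)] by blast
  then have "{\<alpha> \<in> gps_supp a. \<mu> - \<alpha> \<in> gps_supp b} \<subseteq> {\<alpha>. a \<alpha> \<noteq> 0 \<and> \<alpha> \<le> \<mu> - mb}"
    by force
  then show ?thesis using gps_finite_le[OF assms(1)] finite_subset by blast
qed

lemma gps_times_eq_sum: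
  assumes "finite S" "{\<alpha> \<in> gps_supp a. \<mu> - \<alpha> \<in> gps_supp b} \<subseteq> S"
  shows "gps_times a b \<mu> = (\<Sum>\<alpha>\<in>S. a \<alpha> * b (\<mu> - \<alpha>))"
  unfolding gps_times_def by (rule sum.mono_neutral_left[OF assms]) auto

lemma gps_times_single:
  assumes "{\<alpha> \<in> gps_supp a. \<mu> - \<alpha> \<in> gps_supp b} \<subseteq> {\<beta>}"
  shows "gps_times a b \<mu> = a \<beta> * b (\<mu> - \<beta>)"
  using gps_times_eq_sum[OF _ assms] by simp

lemma gps_times_nonzero_ex:
  assumes "gps_times a b \<mu> \<noteq> 0"
  obtains \<alpha> where "a \<alpha> \<noteq> 0" "b (\<mu> - \<alpha>) \<noteq> 0"
  using assms unfolding gps_times_def by (metis (no_types, lifting) mem_Collect_eq sum.neutral gps_supp_iff)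

lemma is_gps_times:
  assumes "is_gps a" "is_gps b" shows "is_gps (gps_times a b)"
  unfolding is_gps_def
proof
  fix M
  obtain ma where ma: "\<And>\<alpha>. a \<alpha> \<noteq> 0 \<Longrightarrow> ma \<le> \<alpha>" using gps_bounded_below[OF assms(1)] by blast
  obtain mb where mb: "\<And>\<beta>. b \<beta> \<noteq> 0 \<Longrightarrow> mb \<le> \<beta>" using gps_bounded_below[OF assms(2)] by blast
  let ?A = "{\<alpha>. a \<alpha> \<noteq> 0 \<and> \<alpha> \<le> M - mb}" and ?B = "{\<beta>. b \<beta> \<noteq> 0 \<and> \<beta> \<le> M - ma}"
  have "{\<mu> \<in> gps_supp (gps_times a b). \<mu> \<le> M} \<subseteq> (\<lambda>(x, y). x + y) ` (?A \<times> ?B)"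
  proof
    fix \<mu> assume \<mu>: "\<mu> \<in> {\<mu> \<in> gps_supp (gps_times a b). \<mu> \<le> M}"
    then have "gps_times a b \<mu> \<noteq> 0" by simp
    then obtain \<alpha> where "a \<alpha> \<noteq> 0" "b (\<mu> - \<alpha>) \<noteq> 0"
      by (rule gps_times_nonzero_ex)
    with \<mu> ma mb show "\<mu> \<in> (\<lambda>(x, y). x + y) ` (?A \<times> ?B)"
      by (intro image_eqI[of _ _ "(\<alpha>, \<mu> - \<alpha>)"]) force+
  qed
  moreover have "finite ((\<lambda>(x, y). x + y) ` (?A \<times> ?B))"
    using gps_finite_le assms by blast
  ultimately show "finite {\<mu> \<in> gps_supp (gps_times a b). \<mu> \<le> M}"
    using finite_subset by blast
qed

lemma gps_times_commute:
  "gps_times a b = gps_times b a"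
proof
  fix \<mu>
  have "(\<Sum>\<alpha>\<in>{\<alpha> \<in> gps_supp a. \<mu> - \<alpha> \<in> gps_supp b}. a \<alpha> * b (\<mu> - \<alpha>))
      = (\<Sum>\<beta>\<in>{\<beta> \<in> gps_supp b. \<mu> - \<beta> \<in> gps_supp a}. b \<beta> * a (\<mu> - \<beta>))"
    by (rule sum.reindex_bij_witness[of _ "\<lambda>\<beta>. \<mu> - \<beta>" "\<lambda>\<alpha>. \<mu> - \<alpha>"]) auto
  then show "gps_times a b \<mu> = gps_times b a \<mu>" by (simp add: gps_times_def)
qed

lemma gps_times_one_left: "gps_times gps_one a = a"
proof
  fix \<mu>
  have "gps_times gps_one a \<mu> = gps_one 0 * a (\<mu> - 0)"
    by (rule gps_times_single) (auto simp: gps_one_def)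
  then show "gps_times gps_one a \<mu> = a \<mu>" by (simp add: gps_one_def)
qed

lemma gps_times_distrib:
  assumes "is_gps a" "is_gps b" "is_gps c"
  shows "gps_times (\<lambda>\<mu>. a \<mu> + b \<mu>) c = (\<lambda>\<mu>. gps_times a c \<mu> + gps_times b c \<mu>)"
proof
  fix \<mu>
  let ?S = "{\<alpha> \<in> gps_supp a. \<mu> - \<alpha> \<in> gps_supp c} \<union> {\<alpha> \<in> gps_supp b. \<mu> - \<alpha> \<in> gps_supp c}"
  have S: "finite ?S" using finite_convolution_support assms by blast
  have "gps_times (\<lambda>\<mu>. a \<mu> + b \<mu>) c \<mu> = (\<Sum>\<alpha>\<in>?S. (a \<alpha> + b \<alpha>) * c (\<mu> - \<alpha>))"
    by (rule gps_times_eq_sum[OF S]) auto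
  also have "\<dots> = (\<Sum>\<alpha>\<in>?S. a \<alpha> * c (\<mu> - \<alpha>)) + (\<Sum>\<alpha>\<in>?S. b \<alpha> * c (\<mu> - \<alpha>))"
    by (simp add: distrib_right sum.distrib)
  also have "\<dots> = gps_times a c \<mu> + gps_times b c \<mu>"
    by (subst (1 2) gps_times_eq_sum[OF S]) auto
  finally show "gps_times (\<lambda>\<mu>. a \<mu> + b \<mu>) c \<mu> = gps_times a c \<mu> + gps_times b c \<mu>" .
qed

definition gps_triples :: "gps \<Rightarrow> gps \<Rightarrow> gps \<Rightarrow> real \<Rightarrow> (real \<times> real \<times> real) set" where
  "gps_triples a b c \<mu> = {(\<alpha>, \<beta>, \<gamma>). a \<alpha> \<noteq> 0 \<and> b \<beta> \<noteq> 0 \<and> c \<gamma> \<noteq> 0 \<and> \<alpha> + \<beta> + \<gamma> = \<mu>}"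

lemma finite_gps_triples:
  assumes "is_gps a" "is_gps b" "is_gps c"
  shows "finite (gps_triples a b c \<mu>)"
proof -
  obtain ma mb mc where "\<And>\<alpha>. a \<alpha> \<noteq> 0 \<Longrightarrow> ma \<le> \<alpha>" "\<And>\<beta>. b \<beta> \<noteq> 0 \<Longrightarrow> mb \<le> \<beta>"
    "\<And>\<gamma>. c \<gamma> \<noteq> 0 \<Longrightarrow> mc \<le> \<gamma>"
    using gps_bounded_below assms by metis
  then have "gps_triples a b c \<mu> \<subseteq> {\<alpha>. a \<alpha> \<noteq> 0 \<and> \<alpha> \<le> \<mu> - mb - mc}
      \<times> {\<beta>. b \<beta> \<noteq> 0 \<and> \<beta> \<le> \<mu> - ma - mc} \<times> {\<gamma>. c \<gamma> \<noteq> 0 \<and> \<gamma> \<le> \<mu> - ma - mb}"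
    unfolding gps_triples_def by fastforce
  then show ?thesis
    using gps_finite_le assms by (meson finite_SigmaI finite_subset)
qed

lemma gps_times_times_eq_triples:
  assumes a: "is_gps a" and b: "is_gps b" and c: "is_gps c"
  shows "gps_times (gps_times a b) c \<mu> = (\<Sum>(\<alpha>, \<beta>, \<gamma>)\<in>gps_triples a b c \<mu>. a \<alpha> * b \<beta> * c \<gamma>)"
proof -
  let ?T = "gps_triples a b c \<mu>"
  \<comment> \<open>A superset of the convolution support of ab and c that does not depend on cancellations in ab.\<close>
  let ?X = "(\<lambda>(\<alpha>, \<beta>, \<gamma>). \<alpha> + \<beta>) ` ?T"
  let ?Y = "\<lambda>\<gamma>. {\<alpha> \<in> gps_supp a. \<gamma> - \<alpha> \<in> gps_supp b}"
  have X: "finite ?X" using finite_gps_triples[OF a b c] by blast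
  have "gps_times (gps_times a b) c \<mu> = (\<Sum>\<gamma>\<in>?X. gps_times a b \<gamma> * c (\<mu> - \<gamma>))"
  proof (rule gps_times_eq_sum[OF X], rule subsetI)
    fix \<gamma> assume \<gamma>: "\<gamma> \<in> {\<gamma> \<in> gps_supp (gps_times a b). \<mu> - \<gamma> \<in> gps_supp c}"
    then have "gps_times a b \<gamma> \<noteq> 0" by simp
    then obtain \<alpha> where "a \<alpha> \<noteq> 0" "b (\<gamma> - \<alpha>) \<noteq> 0"
      by (rule gps_times_nonzero_ex)
    with \<gamma> show "\<gamma> \<in> ?X"
      by (intro image_eqI[of _ _ "(\<alpha>, \<gamma> - \<alpha>, \<mu> - \<gamma>)"]) (auto simp: gps_triples_def)
  qed
  also have "\<dots> = (\<Sum>\<gamma>\<in>?X. \<Sum>\<alpha>\<in>?Y \<gamma>. a \<alpha> * b (\<gamma> - \<alpha>) * c (\<mu> - \<gamma>))"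
    by (simp add: gps_times_def sum_distrib_right)
  also have "\<dots> = (\<Sum>(\<gamma>, \<alpha>)\<in>Sigma ?X ?Y. a \<alpha> * b (\<gamma> - \<alpha>) * c (\<mu> - \<gamma>))"
    using X finite_convolution_support[OF a b] by (subst sum.Sigma) auto
  also have "\<dots> = (\<Sum>(\<alpha>, \<beta>, \<gamma>)\<in>?T. a \<alpha> * b \<beta> * c \<gamma>)"
    by (rule sum.reindex_bij_witness[of _ "\<lambda>(\<alpha>, \<beta>, \<gamma>). (\<alpha> + \<beta>, \<alpha>)" "\<lambda>(\<gamma>, \<alpha>). (\<alpha>, \<gamma> - \<alpha>, \<mu> - \<gamma>)"])
       (force simp: gps_triples_def algebra_simps)+
  finally show ?thesis .
qed

lemma gps_times_assoc:
  assumes a: "is_gps a" and b: "is_gps b" and c: "is_gps c"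
  shows "gps_times (gps_times a b) c = gps_times a (gps_times b c)"
proof
  fix \<mu>
  have "gps_times a (gps_times b c) \<mu> = gps_times (gps_times b c) a \<mu>"
    by (simp add: gps_times_commute)
  also have "\<dots> = (\<Sum>(\<beta>, \<gamma>, \<alpha>)\<in>gps_triples b c a \<mu>. b \<beta> * c \<gamma> * a \<alpha>)"
    by (rule gps_times_times_eq_triples[OF b c a])
  also have "\<dots> = (\<Sum>(\<alpha>, \<beta>, \<gamma>)\<in>gps_triples a b c \<mu>. a \<alpha> * b \<beta> * c \<gamma>)"
    by (rule sum.reindex_bij_witness[of _ "\<lambda>(\<alpha>, \<beta>, \<gamma>). (\<beta>, \<gamma>, \<alpha>)" "\<lambda>(\<beta>, \<gamma>, \<alpha>). (\<alpha>, \<beta>, \<gamma>)"])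
       (auto simp: gps_triples_def algebra_simps)
  finally show "gps_times (gps_times a b) c \<mu> = gps_times a (gps_times b c) \<mu>"
    using gps_times_times_eq_triples[OF a b c] by simp
qed

typedef gser = "{s :: gps. is_gps s}" morphisms gcoeff Abs_gser
  using is_gps_zero by blast

setup_lifting type_definition_gser

lemma is_gps_gcoeff [simp]: "is_gps (gcoeff x)"
  using gcoeff by simp

instantiation gser :: comm_ring_1
begin

lift_definition zero_gser :: gser is "\<lambda>_. 0" by (rule is_gps_zero)
lift_definition one_gser :: gser is gps_one by (rule is_gps_one)
lift_definition plus_gser :: "gser \<Rightarrow> gser \<Rightarrow> gser" is "\<lambda>a b \<mu>. a \<mu> + b \<mu>" by (rule is_gps_add)
lift_definition uminus_gser :: "gser \<Rightarrow> gser" is "\<lambda>a \<mu>. - a \<mu>" by (rule is_gps_supp_mono) auto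
lift_definition minus_gser :: "gser \<Rightarrow> gser \<Rightarrow> gser" is "\<lambda>a b \<mu>. a \<mu> - b \<mu>"
  using is_gps_add[of _ "\<lambda>\<mu>. - _ \<mu>"] is_gps_scale[of _ "\<lambda>_. -1"] by simp
lift_definition times_gser :: "gser \<Rightarrow> gser \<Rightarrow> gser" is gps_times by (rule is_gps_times)

instance
proof
  fix a b c :: gser
  show "a * b * c = a * (b * c)"
    by transfer (rule gps_times_assoc)
  show "a * b = b * a"
    by transfer (rule gps_times_commute)
  show "1 * a = a"
    by transfer (rule gps_times_one_left)
  show "(a + b) * c = a * c + b * c"
    by transfer (rule gps_times_distrib)
  show "a + b + c = a + (b + c)" "a + b = b + a" "0 + a = a" "- a + a = 0" "a - b = a + - b"
    by (transfer, force simp: algebra_simps)+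
  show "(0 :: gser) \<noteq> 1"
    by transfer (metis gps_one_def zero_neq_one)
qed

end

lemma gser_eq_iff: "x = y \<longleftrightarrow> gcoeff x = gcoeff y"
  by (simp add: gcoeff_inject)

lemma gcoeff_times: "gcoeff (x * y) = gps_times (gcoeff x) (gcoeff y)"
  by transfer simp

lemma gcoeff_plus [simp]: "gcoeff (x + y) \<mu> = gcoeff x \<mu> + gcoeff y \<mu>"
  by transfer simp

lemma gcoeff_zero [simp]: "gcoeff 0 \<mu> = 0"
  by transfer simp

lemma gcoeff_one: "gcoeff 1 = gps_one"
  by transfer simp

lemma gcoeff_sum: "gcoeff (sum f A) \<mu> = (\<Sum>a\<in>A. gcoeff (f a) \<mu>)"
  by (induction A rule: infinite_finite_induct) auto

lemma gser_nonzero_iff: "x \<noteq> 0 \<longleftrightarrow> (\<exists>\<mu>. gcoeff x \<mu> \<noteq> 0)"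
  by (auto simp: gser_eq_iff)

lemma gps_pow_gcoeff: "gps_pow (gcoeff x) m = gcoeff (x ^ m)"
  by (induction m) (auto simp: gps_pow_def gcoeff_times gcoeff_one)

lift_definition gterm :: "complex \<Rightarrow> real \<Rightarrow> gser" is "\<lambda>c \<nu> \<mu>. if \<mu> = \<nu> then c else 0"
  by (simp add: is_gps_def gps_supp_def)

abbreviation gconst :: "complex \<Rightarrow> gser" where
  "gconst c \<equiv> gterm c 0"

lemma gcoeff_gterm_times [simp]: "gcoeff (gterm c \<nu> * x) \<mu> = c * gcoeff x (\<mu> - \<nu>)"
proof -
  have "gcoeff (gterm c \<nu> * x) \<mu> = gcoeff (gterm c \<nu>) \<nu> * gcoeff x (\<mu> - \<nu>)"
    unfolding gcoeff_times by (rule gps_times_single) (auto simp: gterm.rep_eq)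
  then show ?thesis by (simp add: gterm.rep_eq)
qed

lemma gconst_eq_0_iff [simp]: "gconst c = 0 \<longleftrightarrow> c = 0"
proof
  assume "gconst c = 0"
  then have "gcoeff (gconst c) 0 = 0" by simp
  then show "c = 0" by (simp add: gterm.rep_eq)
qed (simp add: gser_eq_iff fun_eq_iff gterm.rep_eq)

lemma gconst_0 [simp]: "gconst 0 = 0"
  by simp

lemma gconst_mult: "gconst (a * b) = gconst a * gconst b"
  by (simp add: gser_eq_iff fun_eq_iff gterm.rep_eq)

lemma of_nat_gconst: "(of_nat m :: gser) = gconst (of_nat m)"
proof (induction m)
  case 0
  show ?case by (simp add: gser_eq_iff fun_eq_iff gterm.rep_eq)
next
  case (Suc m)
  have "gconst (1 + of_nat m) = 1 + gconst (of_nat m)"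
    by (simp add: gser_eq_iff fun_eq_iff gterm.rep_eq gcoeff_one gps_one_def)
  with Suc show ?case by simp
qed

section \<open>The operator and the derivations commuting with it\<close>

definition op_weight :: "opkind \<Rightarrow> real \<Rightarrow> complex" where
  "op_weight k \<mu> = (case k of Deriv \<Rightarrow> complex_of_real (\<mu> + 1) | Euler \<Rightarrow> complex_of_real \<mu>
     | QDiff q \<Rightarrow> q powr complex_of_real \<mu>)"

definition op_shift :: "opkind \<Rightarrow> real" where
  "op_shift k = (case k of Deriv \<Rightarrow> 1 | _ \<Rightarrow> 0)"

lemma gps_op_eq: "gps_op k s \<mu> = op_weight k \<mu> * s (\<mu> + op_shift k)"
  by (cases k) (auto simp: gps_op_def op_weight_def op_shift_def)

lift_definition gop :: "opkind \<Rightarrow> gser \<Rightarrow> gser" is gps_op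
  unfolding gps_op_eq[abs_def] by (rule is_gps_shift)

lemma gcoeff_gop: "gcoeff (gop k x) \<mu> = op_weight k \<mu> * gcoeff x (\<mu> + op_shift k)"
  by (simp add: gop.rep_eq gps_op_eq)

definition iter_weight :: "opkind \<Rightarrow> nat \<Rightarrow> real \<Rightarrow> complex" where
  "iter_weight k j \<mu> = (\<Prod>i<j. op_weight k (\<mu> + real i * op_shift k))"

lemma gcoeff_gop_iter:
  "gcoeff ((gop k ^^ j) x) \<mu> = iter_weight k j \<mu> * gcoeff x (\<mu> + real j * op_shift k)"
proof (induction j arbitrary: \<mu>)
  case (Suc j)
  have "gcoeff ((gop k ^^ Suc j) x) \<mu>
      = op_weight k \<mu> * (iter_weight k j (\<mu> + op_shift k) * gcoeff x (\<mu> + op_shift k + real j * op_shift k))"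
    by (simp add: gcoeff_gop Suc.IH)
  also have "\<dots> = iter_weight k (Suc j) \<mu> * gcoeff x (\<mu> + real (Suc j) * op_shift k)"
    unfolding iter_weight_def by (simp only: prod.lessThan_Suc_shift) (simp add: algebra_simps)
  finally show ?case .
qed (simp add: iter_weight_def)

lemma gps_op_iter_gcoeff: "(gps_op k ^^ j) (gcoeff x) = gcoeff ((gop k ^^ j) x)"
  by (induction j) (auto simp: gop.rep_eq)

locale ring_derivation =
  fixes \<delta> :: "'a::comm_ring_1 \<Rightarrow> 'a"
  assumes map_add: "\<delta> (x + y) = \<delta> x + \<delta> y"
    and leibniz: "\<delta> (x * y) = \<delta> x * y + x * \<delta> y"
begin

lemma map_zero [simp]: "\<delta> 0 = 0"
  using map_add[of 0 0] by simp

lemma map_one [simp]: "\<delta> 1 = 0"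
  using leibniz[of 1 1] by simp

lemma map_sum: "\<delta> (sum f A) = (\<Sum>a\<in>A. \<delta> (f a))"
  by (induction A rule: infinite_finite_induct) (simp_all add: map_add)

lemma map_power: "\<delta> (x ^ m) = of_nat m * x ^ (m - 1) * \<delta> x"
proof (induction m)
  case (Suc m)
  then show ?case by (cases m) (simp_all add: leibniz algebra_simps)
qed simp

lemma map_prod:
  assumes "finite I"
  shows "\<delta> (\<Prod>i\<in>I. g i) = (\<Sum>j\<in>I. \<delta> (g j) * (\<Prod>i\<in>I - {j}. g i))"
  using assms
proof (induction I rule: finite_induct)
  case (insert a I)
  have "\<delta> (\<Prod>i\<in>insert a I. g i) = \<delta> (g a) * (\<Prod>i\<in>I. g i) + g a * \<delta> (\<Prod>i\<in>I. g i)"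
    using insert by (simp add: leibniz)
  also have "\<dots> = \<delta> (g a) * (\<Prod>i\<in>I. g i) + (\<Sum>j\<in>I. \<delta> (g j) * (g a * (\<Prod>i\<in>I - {j}. g i)))"
    using insert by (simp add: sum_distrib_left algebra_simps)
  also have "(\<Sum>j\<in>I. \<delta> (g j) * (g a * (\<Prod>i\<in>I - {j}. g i))) = (\<Sum>j\<in>I. \<delta> (g j) * (\<Prod>i\<in>insert a I - {j}. g i))"
  proof (rule sum.cong)
    fix j assume "j \<in> I"
    then have "insert a I - {j} = insert a (I - {j})" "a \<notin> I - {j}" using insert by auto
    then show "\<delta> (g j) * (g a * (\<Prod>i\<in>I - {j}. g i)) = \<delta> (g j) * (\<Prod>i\<in>insert a I - {j}. g i)"
      using insert by simp
  qed simp
  finally show ?case using insert by (simp add: insert_Diff_if)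
qed simp

end

locale op_derivation = ring_derivation \<delta> for \<delta> :: "gser \<Rightarrow> gser" +
  fixes k :: opkind
  assumes map_gconst: "\<delta> (gconst c) = 0"
    and commute: "\<delta> (gop k x) = gop k (\<delta> x)"

lift_definition exponent_derivation :: "(real \<Rightarrow> real) \<Rightarrow> gser \<Rightarrow> gser"
  is "\<lambda>\<phi> s \<mu>. complex_of_real (\<phi> \<mu>) * s \<mu>"
  by (rule is_gps_scale)

lemma gcoeff_exponent_derivation:
  "gcoeff (exponent_derivation \<phi> x) \<mu> = complex_of_real (\<phi> \<mu>) * gcoeff x \<mu>"
  by (simp add: exponent_derivation.rep_eq)

lemma ring_derivation_exponent_derivation:
  assumes add: "\<And>x y. \<phi> (x + y) = \<phi> x + \<phi> y"
  shows "ring_derivation (exponent_derivation \<phi>)"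
proof
  fix x y :: gser
  show "exponent_derivation \<phi> (x + y) = exponent_derivation \<phi> x + exponent_derivation \<phi> y"
    by (simp add: gser_eq_iff fun_eq_iff gcoeff_exponent_derivation algebra_simps)
  let ?a = "gcoeff x" and ?b = "gcoeff y"
  show "exponent_derivation \<phi> (x * y) = exponent_derivation \<phi> x * y + x * exponent_derivation \<phi> y"
    unfolding gser_eq_iff
  proof
    fix \<mu>
    let ?S = "{\<alpha> \<in> gps_supp ?a. \<mu> - \<alpha> \<in> gps_supp ?b}"
    have S: "finite ?S" by (rule finite_convolution_support) simp_all
    have L1: "gcoeff (exponent_derivation \<phi> x * y) \<mu>
        = (\<Sum>\<alpha>\<in>?S. gcoeff (exponent_derivation \<phi> x) \<alpha> * ?b (\<mu> - \<alpha>))"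
      unfolding gcoeff_times by (rule gps_times_eq_sum[OF S]) (auto simp: gcoeff_exponent_derivation)
    have L2: "gcoeff (x * exponent_derivation \<phi> y) \<mu>
        = (\<Sum>\<alpha>\<in>?S. ?a \<alpha> * gcoeff (exponent_derivation \<phi> y) (\<mu> - \<alpha>))"
      unfolding gcoeff_times by (rule gps_times_eq_sum[OF S]) (auto simp: gcoeff_exponent_derivation)
    have L3: "gcoeff (exponent_derivation \<phi> (x * y)) \<mu>
        = (\<Sum>\<alpha>\<in>?S. complex_of_real (\<phi> \<mu>) * (?a \<alpha> * ?b (\<mu> - \<alpha>)))"
      by (simp add: gcoeff_exponent_derivation gcoeff_times gps_times_def sum_distrib_left)
    show "gcoeff (exponent_derivation \<phi> (x * y)) \<mu>
        = gcoeff (exponent_derivation \<phi> x * y + x * exponent_derivation \<phi> y) \<mu>"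
      unfolding gcoeff_plus L1 L2 L3 sum.distrib[symmetric]
    proof (rule sum.cong[OF refl])
      fix \<alpha>
      have "\<phi> \<mu> = \<phi> \<alpha> + \<phi> (\<mu> - \<alpha>)" using add[of \<alpha> "\<mu> - \<alpha>"] by simp
      then show "complex_of_real (\<phi> \<mu>) * (?a \<alpha> * ?b (\<mu> - \<alpha>))
          = gcoeff (exponent_derivation \<phi> x) \<alpha> * ?b (\<mu> - \<alpha>) + ?a \<alpha> * gcoeff (exponent_derivation \<phi> y) (\<mu> - \<alpha>)"
        by (simp add: gcoeff_exponent_derivation algebra_simps)
    qed
  qed
qed

lemma op_derivation_exponent_derivation:
  assumes add: "\<And>x y. \<phi> (x + y) = \<phi> x + \<phi> y" and shift: "\<phi> (op_shift k) = 0"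
  shows "op_derivation (exponent_derivation \<phi>) k"
proof -
  interpret ring_derivation "exponent_derivation \<phi>"
    by (rule ring_derivation_exponent_derivation[OF add])
  have "\<phi> 0 = 0" using add[of 0 0] by simp
  moreover have "\<phi> (\<mu> + op_shift k) = \<phi> \<mu>" for \<mu> using add[of \<mu>] shift by simp
  ultimately show ?thesis
    by unfold_locales (simp_all add: gser_eq_iff fun_eq_iff gcoeff_exponent_derivation gterm.rep_eq gcoeff_gop)
qed

lemma gop_Deriv_eq: "gop Deriv x = gterm 1 (-1) * exponent_derivation (\<lambda>\<mu>. \<mu>) x"
  by (simp add: gser_eq_iff fun_eq_iff gcoeff_gop gcoeff_exponent_derivation op_weight_def op_shift_def)

lemma op_derivation_Deriv: "op_derivation (gop Deriv) Deriv"
proof -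
  interpret E: op_derivation "exponent_derivation (\<lambda>\<mu>. \<mu>)" Euler
    by (rule op_derivation_exponent_derivation) (simp_all add: op_shift_def)
  show ?thesis
  proof unfold_locales
    fix x y :: gser and c
    show "gop Deriv (x + y) = gop Deriv x + gop Deriv y"
      by (simp add: gop_Deriv_eq E.map_add algebra_simps)
    show "gop Deriv (x * y) = gop Deriv x * y + x * gop Deriv y"
      by (simp add: gop_Deriv_eq E.leibniz algebra_simps)
    show "gop Deriv (gconst c) = 0"
      by (simp add: gop_Deriv_eq E.map_gconst)
  qed simp
qed

section \<open>Differential polynomials\<close>

definition gmonomial :: "opkind \<Rightarrow> gser \<Rightarrow> nat list \<Rightarrow> gser" where
  "gmonomial k S \<alpha> = (\<Prod>i<length \<alpha>. ((gop k ^^ i) S) ^ (\<alpha> ! i))"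

definition geval :: "opkind \<Rightarrow> (nat list \<Rightarrow> complex) \<Rightarrow> gser \<Rightarrow> gser" where
  "geval k P S = (\<Sum>\<alpha>\<in>{\<alpha>. P \<alpha> \<noteq> 0}. gconst (P \<alpha>) * gmonomial k S \<alpha>)"

lemma foldr_times_eq_prod:
  "distinct xs \<Longrightarrow> foldr (\<lambda>i acc. f i * acc) xs 1 = (\<Prod>i\<in>set xs. f i :: 'a::comm_monoid_mult)"
  by (induction xs) auto

lemma gps_monomial_gcoeff: "gps_monomial k (gcoeff S) \<alpha> = gcoeff (gmonomial k S \<alpha>)"
proof -
  have "foldr (\<lambda>i acc. gps_times (gps_pow ((gps_op k ^^ i) (gcoeff S)) (\<alpha> ! i)) acc) xs gps_one
      = gcoeff (foldr (\<lambda>i acc. ((gop k ^^ i) S) ^ (\<alpha> ! i) * acc) xs 1)" for xs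
    by (induction xs) (simp_all add: gcoeff_one gcoeff_times gps_op_iter_gcoeff gps_pow_gcoeff)
  then show ?thesis
    unfolding gps_monomial_def gmonomial_def by (simp add: foldr_times_eq_prod atLeast0LessThan)
qed

lemma gps_eval_gcoeff:
  assumes "finite {\<alpha>. P \<alpha> \<noteq> 0}"
  shows "gps_eval k P (gcoeff S) = gcoeff (geval k P S)"
  by (simp add: gps_eval_def geval_def fun_eq_iff gcoeff_sum gps_monomial_gcoeff)

definition poly_pderiv :: "nat \<Rightarrow> nat \<Rightarrow> (nat list \<Rightarrow> complex) \<Rightarrow> nat list \<Rightarrow> complex" where
  "poly_pderiv n j P \<beta> = (if length \<beta> = Suc n then of_nat (\<beta> ! j + 1) * P (\<beta>[j := \<beta> ! j + 1]) else 0)"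

lemma geval_poly_pderiv:
  assumes P: "is_poly_order n P" and j: "j < Suc n"
  shows "geval k (poly_pderiv n j P) S
    = (\<Sum>\<alpha>\<in>{\<alpha>. P \<alpha> \<noteq> 0}. gconst (P \<alpha> * of_nat (\<alpha> ! j)) * gmonomial k S (\<alpha>[j := \<alpha> ! j - 1]))"
proof -
  let ?A = "{\<alpha>. P \<alpha> \<noteq> 0}" and ?A' = "{\<alpha>. P \<alpha> \<noteq> 0 \<and> \<alpha> ! j \<noteq> 0}"
  let ?lower = "\<lambda>\<alpha>. \<alpha>[j := \<alpha> ! j - 1]"
  have A: "finite ?A" and len: "\<And>\<alpha>. \<alpha> \<in> ?A \<Longrightarrow> length \<alpha> = Suc n"
    using P by (auto simp: is_poly_order_def)
  have "(\<Sum>\<alpha>\<in>?A. gconst (P \<alpha> * of_nat (\<alpha> ! j)) * gmonomial k S (?lower \<alpha>))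
      = (\<Sum>\<alpha>\<in>?A'. gconst (P \<alpha> * of_nat (\<alpha> ! j)) * gmonomial k S (?lower \<alpha>))"
  proof (rule sum.mono_neutral_right[OF A])
    show "\<forall>\<alpha>\<in>?A - ?A'. gconst (P \<alpha> * of_nat (\<alpha> ! j)) * gmonomial k S (?lower \<alpha>) = 0"
    proof
      fix \<alpha> assume "\<alpha> \<in> ?A - ?A'"
      then have "\<alpha> ! j = 0" by blast
      then show "gconst (P \<alpha> * of_nat (\<alpha> ! j)) * gmonomial k S (?lower \<alpha>) = 0" by simp
    qed
  qed auto
  also have "\<dots> = geval k (poly_pderiv n j P) S"
    unfolding geval_def
  proof (rule sum.reindex_bij_witness[of _ "\<lambda>\<beta>. \<beta>[j := \<beta> ! j + 1]" ?lower])
    fix \<alpha> assume \<alpha>: "\<alpha> \<in> ?A'"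
    then have "length \<alpha> = Suc n" using len by blast
    with \<alpha> j show "(?lower \<alpha>)[j := ?lower \<alpha> ! j + 1] = \<alpha>"
      and "?lower \<alpha> \<in> {\<beta>. poly_pderiv n j P \<beta> \<noteq> 0}"
      and "gconst (poly_pderiv n j P (?lower \<alpha>)) * gmonomial k S (?lower \<alpha>)
        = gconst (P \<alpha> * of_nat (\<alpha> ! j)) * gmonomial k S (?lower \<alpha>)"
      by (auto simp: poly_pderiv_def mult.commute)
  next
    fix \<beta> assume \<beta>: "\<beta> \<in> {\<beta>. poly_pderiv n j P \<beta> \<noteq> 0}"
    then have "length \<beta> = Suc n" by (simp add: poly_pderiv_def split: if_splits)
    with \<beta> j show "?lower (\<beta>[j := \<beta> ! j + 1]) = \<beta>" and "\<beta>[j := \<beta> ! j + 1] \<in> ?A'"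
      by (auto simp: poly_pderiv_def)
  qed
  finally show ?thesis by (rule sym)
qed

context op_derivation
begin

lemma map_gop_iter: "\<delta> ((gop k ^^ j) x) = (gop k ^^ j) (\<delta> x)"
  by (induction j) (simp_all add: commute)

lemma map_gmonomial:
  "\<delta> (gmonomial k S \<alpha>)
    = (\<Sum>j<length \<alpha>. gconst (of_nat (\<alpha> ! j)) * gmonomial k S (\<alpha>[j := \<alpha> ! j - 1]) * (gop k ^^ j) (\<delta> S))"
  unfolding gmonomial_def[of k S \<alpha>] map_prod[OF finite_lessThan]
proof (rule sum.cong[OF refl])
  fix j assume j: "j \<in> {..<length \<alpha>}"
  let ?f = "\<lambda>i. (gop k ^^ i) S"
  have "gmonomial k S (\<alpha>[j := \<alpha> ! j - 1])
      = ?f j ^ (\<alpha> ! j - 1) * (\<Prod>i\<in>{..<length \<alpha>} - {j}. ?f i ^ (\<alpha>[j := \<alpha> ! j - 1] ! i))"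
    using j by (simp add: gmonomial_def prod.remove[of _ j])
  also have "(\<Prod>i\<in>{..<length \<alpha>} - {j}. ?f i ^ (\<alpha>[j := \<alpha> ! j - 1] ! i))
      = (\<Prod>i\<in>{..<length \<alpha>} - {j}. ?f i ^ (\<alpha> ! i))"
    by (rule prod.cong) auto
  finally show "\<delta> (?f j ^ (\<alpha> ! j)) * (\<Prod>i\<in>{..<length \<alpha>} - {j}. ?f i ^ (\<alpha> ! i))
      = gconst (of_nat (\<alpha> ! j)) * gmonomial k S (\<alpha>[j := \<alpha> ! j - 1]) * (gop k ^^ j) (\<delta> S)"
    by (simp add: map_power map_gop_iter of_nat_gconst algebra_simps)
qed

lemma geval_chain_rule:
  assumes P: "is_poly_order n P"
  shows "\<delta> (geval k P S) = (\<Sum>j<Suc n. geval k (poly_pderiv n j P) S * (gop k ^^ j) (\<delta> S))"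
proof -
  let ?A = "{\<alpha>. P \<alpha> \<noteq> 0}"
  have len: "\<And>\<alpha>. \<alpha> \<in> ?A \<Longrightarrow> length \<alpha> = Suc n"
    using P by (auto simp: is_poly_order_def)
  have "\<delta> (geval k P S) = (\<Sum>\<alpha>\<in>?A. gconst (P \<alpha>) * \<delta> (gmonomial k S \<alpha>))"
    by (simp add: geval_def map_sum leibniz map_gconst)
  also have "\<dots> = (\<Sum>\<alpha>\<in>?A. \<Sum>j<Suc n.
      gconst (P \<alpha> * of_nat (\<alpha> ! j)) * gmonomial k S (\<alpha>[j := \<alpha> ! j - 1]) * (gop k ^^ j) (\<delta> S))"
    by (rule sum.cong) (simp_all add: map_gmonomial len sum_distrib_left gconst_mult mult.assoc del: sum.lessThan_Suc)
  also have "\<dots> = (\<Sum>j<Suc n. (\<Sum>\<alpha>\<in>?A.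
      gconst (P \<alpha> * of_nat (\<alpha> ! j)) * gmonomial k S (\<alpha>[j := \<alpha> ! j - 1])) * (gop k ^^ j) (\<delta> S))"
    by (subst sum.swap) (simp add: sum_distrib_right)
  also have "\<dots> = (\<Sum>j<Suc n. geval k (poly_pderiv n j P) S * (gop k ^^ j) (\<delta> S))"
    by (rule sum.cong) (simp_all add: geval_poly_pderiv[OF P])
  finally show ?thesis .
qed

end

section \<open>Orders of solutions of linear equations\<close>

definition gorder_at :: "gser \<Rightarrow> real \<Rightarrow> bool" where
  "gorder_at g \<mu> \<longleftrightarrow> gcoeff g \<mu> \<noteq> 0 \<and> (\<forall>\<nu><\<mu>. gcoeff g \<nu> = 0)"

lemma gorder_at_exists:
  assumes "g \<noteq> 0" shows "\<exists>\<mu>. gorder_at g \<mu>"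
proof -
  obtain \<mu>0 where "gcoeff g \<mu>0 \<noteq> 0" using assms gser_nonzero_iff by blast
  then obtain m where "m \<in> gps_supp (gcoeff g)" "\<forall>\<mu>\<in>gps_supp (gcoeff g). m \<le> \<mu>"
    using gps_has_least[of "gcoeff g" \<mu>0] by auto
  then have "gorder_at g m" by (force simp: gorder_at_def)
  then show ?thesis ..
qed

lemma gorder_at_le: "gorder_at g \<mu> \<Longrightarrow> gcoeff g \<nu> \<noteq> 0 \<Longrightarrow> \<mu> \<le> \<nu>"
  unfolding gorder_at_def by (meson not_le)

definition indicial_var :: "opkind \<Rightarrow> real \<Rightarrow> complex" where
  "indicial_var k \<mu> = (case k of QDiff q \<Rightarrow> q powr complex_of_real \<mu> | _ \<Rightarrow> complex_of_real \<mu>)"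

definition indicial_factor :: "opkind \<Rightarrow> nat \<Rightarrow> complex poly" where
  "indicial_factor k j = (\<Prod>i<j. [:if k = Deriv then of_real (real i + 1 - real j) else 0, 1:])"

lemma iter_weight_eq_indicial:
  "iter_weight k j (\<mu> - real j * op_shift k) = poly (indicial_factor k j) (indicial_var k \<mu>)"
  unfolding iter_weight_def indicial_factor_def poly_prod
  by (rule prod.cong[OF refl], cases k)
     (simp_all add: op_weight_def op_shift_def indicial_var_def algebra_simps)

lemma degree_indicial_factor: "degree (indicial_factor k j) = j"
  unfolding indicial_factor_def by (subst degree_prod_eq_sum_degree) auto

lemma lead_coeff_indicial_factor: "lead_coeff (indicial_factor k j) = 1"
  unfolding indicial_factor_def lead_coeff_prod by simp

lemma inj_indicial_var:
  assumes "admissible_op k" shows "inj (indicial_var k)"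
proof (cases k)
  case (QDiff q)
  then have q: "q \<noteq> 0" "norm q \<noteq> 1" using assms by (auto simp: admissible_op_def)
  show ?thesis
  proof (rule injI)
    fix x y assume "indicial_var k x = indicial_var k y"
    then have "norm (q powr complex_of_real x) = norm (q powr complex_of_real y)"
      using QDiff by (simp add: indicial_var_def)
    then have "norm q powr x = norm q powr y"
      by (simp add: norm_powr_real_powr')
    then show "x = y" using q by (simp add: powr_inj)
  qed
qed (auto simp: indicial_var_def inj_def)

lemma sum_smult_degree_eq_nonzero:
  fixes B :: "nat \<Rightarrow> 'a::idom poly"
  assumes deg: "\<And>j. degree (B j) = j" and nz: "\<And>j. B j \<noteq> 0" and c: "\<exists>j<Suc n. c j \<noteq> 0"
  shows "(\<Sum>j<Suc n. smult (c j) (B j)) \<noteq> 0"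
proof -
  define J where "J = {j. j < Suc n \<and> c j \<noteq> 0}"
  have J: "finite J" "J \<noteq> {}" using c by (auto simp: J_def)
  define j0 where "j0 = Max J"
  define p where "p = (\<Sum>j<Suc n. smult (c j) (B j))"
  have j0: "j0 \<in> J" and j0_max: "\<And>j. j \<in> J \<Longrightarrow> j \<le> j0"
    using Max_in[OF J] Max_ge[OF J(1)] by (auto simp: j0_def)
  have "coeff p j0 = (\<Sum>j<Suc n. c j * coeff (B j) j0)"
    by (simp add: p_def coeff_sum)
  also have "\<dots> = (\<Sum>j\<in>{j0}. c j * coeff (B j) j0)"
  proof (rule sum.mono_neutral_right)
    show "\<forall>j\<in>{..<Suc n} - {j0}. c j * coeff (B j) j0 = 0"
    proof
      fix j assume j: "j \<in> {..<Suc n} - {j0}"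
      show "c j * coeff (B j) j0 = 0"
      proof (cases "j < j0")
        case True then show ?thesis by (simp add: coeff_eq_0 deg)
      next
        case False
        then have "j \<notin> J" using j j0_max by force
        then show ?thesis using j by (auto simp: J_def)
      qed
    qed
  qed (use j0 J_def in auto)
  moreover have "coeff (B j0) j0 \<noteq> 0"
    using nz[of j0] deg[of j0] leading_coeff_neq_0 by metis
  ultimately have "coeff p j0 \<noteq> 0" using j0 by (simp add: J_def)
  then have "p \<noteq> 0" by auto
  then show ?thesis unfolding p_def .
qed

lemma indicial_roots_bound:
  assumes adm: "admissible_op k" and c: "\<exists>j<Suc n. c j \<noteq> 0"
  defines "Z \<equiv> {\<mu>. (\<Sum>j<Suc n. c j * iter_weight k j (\<mu> - real j * op_shift k)) = 0}"
  shows "finite Z \<and> card Z \<le> n"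
proof -
  define p where "p = (\<Sum>j<Suc n. smult (c j) (indicial_factor k j))"
  have p: "p \<noteq> 0" unfolding p_def
    by (rule sum_smult_degree_eq_nonzero[OF degree_indicial_factor _ c])
       (metis lead_coeff_indicial_factor leading_coeff_0_iff zero_neq_one)
  have "degree p \<le> n"
    unfolding p_def by (rule degree_sum_le) (auto intro: order.trans[OF degree_smult_le] simp: degree_indicial_factor)
  have sub: "indicial_var k ` Z \<subseteq> {x. poly p x = 0}"
    by (auto simp: Z_def p_def poly_sum iter_weight_eq_indicial)
  have inj: "inj_on (indicial_var k) Z"
    using inj_indicial_var[OF adm] by (rule inj_on_subset) simp
  have roots: "finite {x. poly p x = 0}" by (rule poly_roots_finite[OF p])
  have "finite Z" using finite_imageD[OF finite_subset[OF sub roots] inj] .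
  moreover have "card Z \<le> card {x. poly p x = 0}" by (rule card_inj_on_le[OF inj sub roots])
  ultimately show ?thesis using card_poly_roots_bound[OF p] \<open>degree p \<le> n\<close> by linarith
qed

lemma gcoeff_linear_combination_at_order:
  assumes low_a: "\<And>j \<beta>. j < Suc n \<Longrightarrow> gcoeff (a j) \<beta> \<noteq> 0 \<Longrightarrow> m + real j * op_shift k \<le> \<beta>"
    and low_g: "\<And>\<nu>. \<nu> < \<mu> \<Longrightarrow> gcoeff g \<nu> = 0"
  shows "gcoeff (\<Sum>j<Suc n. a j * (gop k ^^ j) g) (m + \<mu>)
    = (\<Sum>j<Suc n. gcoeff (a j) (m + real j * op_shift k) * iter_weight k j (\<mu> - real j * op_shift k)) * gcoeff g \<mu>"
  unfolding gcoeff_sum sum_distrib_right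
proof (rule sum.cong[OF refl])
  fix j assume j: "j \<in> {..<Suc n}"
  let ?t = "real j * op_shift k"
  have "gcoeff (a j * (gop k ^^ j) g) (m + \<mu>) = gcoeff (a j) (m + ?t) * gcoeff ((gop k ^^ j) g) (m + \<mu> - (m + ?t))"
    unfolding gcoeff_times
  proof (rule gps_times_single, rule subsetI)
    fix \<beta> assume "\<beta> \<in> {\<alpha> \<in> gps_supp (gcoeff (a j)). m + \<mu> - \<alpha> \<in> gps_supp (gcoeff ((gop k ^^ j) g))}"
    then have "gcoeff (a j) \<beta> \<noteq> 0" and "gcoeff g (m + \<mu> - \<beta> + ?t) \<noteq> 0"
      by (auto simp: gcoeff_gop_iter)
    then have "m + ?t \<le> \<beta>" and "\<not> m + \<mu> - \<beta> + ?t < \<mu>"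
      using low_a j low_g by auto
    then show "\<beta> \<in> {m + ?t}" by auto
  qed
  then show "gcoeff (a j * (gop k ^^ j) g) (m + \<mu>)
      = gcoeff (a j) (m + ?t) * iter_weight k j (\<mu> - ?t) * gcoeff g \<mu>"
    by (simp add: gcoeff_gop_iter)
qed

lemma solution_orders_bound:
  assumes adm: "admissible_op k" and a: "\<exists>j<Suc n. a j \<noteq> 0"
  defines "Z \<equiv> {\<mu>. \<exists>g. gorder_at g \<mu> \<and> (\<Sum>j<Suc n. a j * (gop k ^^ j) g) = 0}"
  shows "finite Z \<and> card Z \<le> n"
proof -
  define J where "J = {j. j < Suc n \<and> a j \<noteq> 0}"
  have J: "finite J" "J \<noteq> {}" using a by (auto simp: J_def)
  have "\<forall>j\<in>J. \<exists>\<mu>. gorder_at (a j) \<mu>" using gorder_at_exists by (simp add: J_def)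
  then obtain ord where ord: "\<And>j. j \<in> J \<Longrightarrow> gorder_at (a j) (ord j)"
    by metis
  \<comment> \<open>a j * g^(j) has order at least ord j - j * op_shift k plus the order of g; m attains the least bound.\<close>
  define m where "m = Min ((\<lambda>j. ord j - real j * op_shift k) ` J)"
  have low_a: "m + real j * op_shift k \<le> \<beta>" if "j < Suc n" "gcoeff (a j) \<beta> \<noteq> 0" for j \<beta>
  proof -
    have j: "j \<in> J" using that by (auto simp: J_def)
    then have "m \<le> ord j - real j * op_shift k" unfolding m_def using J by (intro Min_le) auto
    then show ?thesis using gorder_at_le[OF ord[OF j] that(2)] by linarith
  qed
  have "m \<in> (\<lambda>j. ord j - real j * op_shift k) ` J"
    unfolding m_def using J by (intro Min_in) auto
  then obtain j0 where j0: "j0 \<in> J" "m = ord j0 - real j0 * op_shift k" by blast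
  define c where "c j = gcoeff (a j) (m + real j * op_shift k)" for j
  have c: "\<exists>j<Suc n. c j \<noteq> 0"
    using j0 ord[OF j0(1)] by (intro exI[of _ j0]) (auto simp: c_def J_def gorder_at_def)
  have "Z \<subseteq> {\<mu>. (\<Sum>j<Suc n. c j * iter_weight k j (\<mu> - real j * op_shift k)) = 0}"
  proof
    fix \<mu> assume "\<mu> \<in> Z"
    then obtain g where g: "gorder_at g \<mu>" and eq: "(\<Sum>j<Suc n. a j * (gop k ^^ j) g) = 0"
      by (auto simp: Z_def)
    have "gcoeff (\<Sum>j<Suc n. a j * (gop k ^^ j) g) (m + \<mu>)
        = (\<Sum>j<Suc n. c j * iter_weight k j (\<mu> - real j * op_shift k)) * gcoeff g \<mu>"
      unfolding c_def by (rule gcoeff_linear_combination_at_order[OF low_a]) (use g in \<open>auto simp: gorder_at_def\<close>)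
    then have "(\<Sum>j<Suc n. c j * iter_weight k j (\<mu> - real j * op_shift k)) * gcoeff g \<mu> = 0"
      using eq by (metis gcoeff_zero)
    then show "\<mu> \<in> {\<mu>. (\<Sum>j<Suc n. c j * iter_weight k j (\<mu> - real j * op_shift k)) = 0}"
      using g by (simp add: gorder_at_def)
  qed
  with indicial_roots_bound[OF adm c] show ?thesis
    by (meson card_mono finite_subset le_trans)
qed

section \<open>Orders of derivatives of a series\<close>

interpretation qspace: vector_space "\<lambda>(r::rat) (x::real). real_of_rat r * x"
  by unfold_locales (simp_all add: algebra_simps of_rat_add of_rat_mult)

interpretation qspace_pair:
  vector_space_pair "\<lambda>(r::rat) (x::real). real_of_rat r * x" "\<lambda>(r::rat) (x::real). real_of_rat r * x"
  by unfold_locales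

lemma rat_indep_imp_independent:
  assumes "rat_indep B" "finite B" shows "qspace.independent B"
proof
  assume "qspace.dependent B"
  then obtain t u v where t: "finite t" "t \<subseteq> B" "(\<Sum>v\<in>t. real_of_rat (u v) * v) = 0"
    and v: "v \<in> t" "u v \<noteq> 0"
    unfolding qspace.dependent_explicit by blast
  define r where "r v = (if v \<in> t then u v else 0)" for v
  have "(\<Sum>b\<in>B. real_of_rat (r b) * b) = (\<Sum>b\<in>t. real_of_rat (r b) * b)"
    by (rule sum.mono_neutral_right[OF assms(2) t(2)]) (auto simp: r_def)
  also have "\<dots> = 0" using t(3) by (simp add: r_def)
  finally have "\<forall>b\<in>B. r b = 0" using assms(1) unfolding rat_indep_def by blast
  then have "r v = 0" using v t(2) by blast
  with v show False by (simp add: r_def)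
qed

lemma ex_additive_separating:
  assumes "\<mu> \<notin> qspace.span T"
  obtains \<phi> :: "real \<Rightarrow> real"
  where "\<And>x y. \<phi> (x + y) = \<phi> x + \<phi> y" "\<phi> \<mu> = 1" "\<And>x. x \<in> T \<Longrightarrow> \<phi> x = 0"
proof -
  obtain B0 where B0: "B0 \<subseteq> T" "qspace.independent B0" "T \<subseteq> qspace.span B0"
    by (rule qspace.maximal_independent_subset)
  have \<mu>: "\<mu> \<notin> qspace.span B0" using assms qspace.span_mono[OF B0(1)] by blast
  then have "\<mu> \<notin> B0" using qspace.span_base by blast
  define B where "B = insert \<mu> B0"
  have B: "qspace.independent B" unfolding B_def by (rule qspace.independent_insertI[OF \<mu> B0(2)])
  define \<phi> where "\<phi> = qspace_pair.construct B (\<lambda>b. if b = \<mu> then 1 else 0)"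
  have lin: "Vector_Spaces.linear (\<lambda>(r::rat) (x::real). real_of_rat r * x) (\<lambda>(r::rat) (x::real). real_of_rat r * x) \<phi>"
    unfolding \<phi>_def by (rule qspace_pair.linear_construct[OF B])
  have basis: "\<phi> b = (if b = \<mu> then 1 else 0)" if "b \<in> B" for b
    unfolding \<phi>_def using qspace_pair.construct_basis[OF B that] by simp
  have "\<phi> b = 0" if "b \<in> B0" for b
    using basis[of b] that \<open>\<mu> \<notin> B0\<close> by (auto simp: B_def)
  then have "\<phi> x = 0" if "x \<in> T" for x
    using qspace_pair.linear_eq_0_on_span[OF lin] B0(3) that by blast
  moreover have "\<phi> \<mu> = 1" using basis[of \<mu>] by (simp add: B_def)
  ultimately show ?thesis using that qspace_pair.linear_add[OF lin] by blast
qed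

lemma subset_span_new_elements:
  fixes A E :: "real set"
  assumes fin: "\<And>M. finite {\<mu> \<in> A. \<mu> \<le> M}"
  defines "N \<equiv> {\<mu> \<in> A. \<mu> \<notin> qspace.span (E \<union> {\<nu> \<in> A. \<nu> < \<mu>})}"
  shows "A \<subseteq> qspace.span (E \<union> N)"
proof (rule ccontr)
  let ?C = "{\<mu> \<in> A. \<mu> \<notin> qspace.span (E \<union> N)}"
  assume "\<not> A \<subseteq> qspace.span (E \<union> N)"
  then obtain x where "x \<in> ?C" by blast
  moreover have "finite {\<mu> \<in> ?C. \<mu> \<le> M}" for M
    using fin[of M] by (rule finite_subset[rotated]) auto
  ultimately obtain \<mu> where \<mu>: "\<mu> \<in> ?C" and least: "\<And>\<nu>. \<nu> \<in> ?C \<Longrightarrow> \<mu> \<le> \<nu>"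
    using finite_lower_sections_has_least[of ?C] by blast
  have "E \<union> {\<nu> \<in> A. \<nu> < \<mu>} \<subseteq> qspace.span (E \<union> N)"
    using least qspace.span_superset by force
  then have "qspace.span (E \<union> {\<nu> \<in> A. \<nu> < \<mu>}) \<subseteq> qspace.span (E \<union> N)"
    by (rule qspace.span_minimal) simp
  moreover have "\<mu> \<notin> N" using \<mu> qspace.span_base by blast
  ultimately show False using \<mu> by (auto simp: N_def)
qed

definition derived_orders :: "opkind \<Rightarrow> gser \<Rightarrow> real set" where
  "derived_orders k S = {\<mu>. \<exists>\<delta>. op_derivation \<delta> k \<and> gorder_at (\<delta> S) \<mu>}"

lemma new_exponent_in_derived_orders:
  assumes "gcoeff S \<mu> \<noteq> 0"
    and "\<mu> \<notin> qspace.span (insert (op_shift k) {\<nu>. gcoeff S \<nu> \<noteq> 0 \<and> \<nu> < \<mu>})"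
  shows "\<mu> \<in> derived_orders k S"
proof -
  obtain \<phi> :: "real \<Rightarrow> real" where add: "\<And>x y. \<phi> (x + y) = \<phi> x + \<phi> y" and "\<phi> \<mu> = 1"
    and vanish: "\<And>x. x \<in> insert (op_shift k) {\<nu>. gcoeff S \<nu> \<noteq> 0 \<and> \<nu> < \<mu>} \<Longrightarrow> \<phi> x = 0"
    using ex_additive_separating[OF assms(2)] by blast
  have "op_derivation (exponent_derivation \<phi>) k"
    using add vanish by (intro op_derivation_exponent_derivation) auto
  moreover have "gorder_at (exponent_derivation \<phi> S) \<mu>"
    using assms(1) \<open>\<phi> \<mu> = 1\<close> vanish by (auto simp: gorder_at_def gcoeff_exponent_derivation)
  ultimately show ?thesis unfolding derived_orders_def by blast
qed

lemma derived_order_Deriv_below: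
  assumes "gcoeff S \<mu> \<noteq> 0" "\<mu> \<noteq> 0"
  shows "\<exists>\<nu>\<in>derived_orders Deriv S. \<forall>\<mu>. gcoeff S \<mu> \<noteq> 0 \<longrightarrow> \<mu> \<noteq> 0 \<longrightarrow> \<nu> < \<mu>"
proof -
  define s0 where "s0 \<mu> = (if \<mu> = 0 then 0 else gcoeff S \<mu>)" for \<mu>
  have "is_gps s0" by (rule is_gps_supp_mono[OF is_gps_gcoeff]) (simp add: s0_def split: if_splits)
  moreover have "\<mu> \<in> gps_supp s0" using assms by (simp add: s0_def)
  ultimately obtain \<mu>1 where \<mu>1: "s0 \<mu>1 \<noteq> 0" and least: "\<And>\<mu>. s0 \<mu> \<noteq> 0 \<Longrightarrow> \<mu>1 \<le> \<mu>"
    using gps_has_least by force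
  have "gcoeff (gop Deriv S) \<nu> = 0" if "\<nu> < \<mu>1 - 1" for \<nu>
  proof -
    have "\<nu> + 1 = 0 \<or> gcoeff S (\<nu> + 1) = 0" using least[of "\<nu> + 1"] that by (force simp: s0_def)
    then show ?thesis by (auto simp: gcoeff_gop op_weight_def op_shift_def simp del: of_real_add)
  qed
  moreover have "gcoeff (gop Deriv S) (\<mu>1 - 1) \<noteq> 0"
    using \<mu>1 by (simp add: gcoeff_gop op_weight_def op_shift_def s0_def split: if_splits)
  ultimately have "gorder_at (gop Deriv S) (\<mu>1 - 1)" by (simp add: gorder_at_def)
  then have "\<mu>1 - 1 \<in> derived_orders Deriv S"
    using op_derivation_Deriv unfolding derived_orders_def by blast
  moreover have "\<mu>1 - 1 < \<mu>" if "gcoeff S \<mu> \<noteq> 0" "\<mu> \<noteq> 0" for \<mu>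
    using least[of \<mu>] that by (simp add: s0_def)
  ultimately show ?thesis by blast
qed

lemma qdim_gt_imp_card_gt:
  assumes "qdim_gt A n" "A \<subseteq> qspace.span E" "finite E"
  shows "n < card E"
proof -
  obtain B where B: "B \<subseteq> A" "finite B" "card B = Suc n" "rat_indep B"
    using assms(1) unfolding qdim_gt_def by blast
  have "qspace.independent B" by (rule rat_indep_imp_independent[OF B(4) B(2)])
  then have "card B \<le> card E"
    using qspace.independent_span_bound[OF assms(3)] B(1) assms(2) by blast
  then show ?thesis using B(3) by simp
qed

lemma qdim_gt_ex_nonzero:
  assumes "qdim_gt A n" obtains b where "b \<in> A" "b \<noteq> 0"
proof -
  obtain B where B: "B \<subseteq> A" "finite B" "card B = Suc n" "rat_indep B"
    using assms unfolding qdim_gt_def by blast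
  then obtain b where "b \<in> B" by fastforce
  moreover have "b \<noteq> 0"
    using \<open>b \<in> B\<close> rat_indep_imp_independent[OF B(4) B(2)] qspace.dependent_zero by blast
  ultimately show ?thesis using that B(1) by blast
qed

lemma derived_orders_spanning_subset:
  "\<exists>N \<subseteq> derived_orders k S. gps_supp (gcoeff S) \<subseteq> qspace.span (insert (op_shift k) N)
      \<and> (\<forall>\<mu>\<in>N. gcoeff S \<mu> \<noteq> 0 \<and> \<mu> \<noteq> 0)"
proof (intro exI conjI)
  let ?A = "gps_supp (gcoeff S)"
  let ?N = "{\<mu> \<in> ?A. \<mu> \<notin> qspace.span ({op_shift k} \<union> {\<nu> \<in> ?A. \<nu> < \<mu>})}"
  show "?N \<subseteq> derived_orders k S"
    using new_exponent_in_derived_orders by auto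
  show "?A \<subseteq> qspace.span (insert (op_shift k) ?N)"
    using subset_span_new_elements[of ?A "{op_shift k}"] gps_finite_le[OF is_gps_gcoeff] by auto
  show "\<forall>\<mu>\<in>?N. gcoeff S \<mu> \<noteq> 0 \<and> \<mu> \<noteq> 0"
    using qspace.span_zero by auto
qed

lemma derived_orders_large:
  assumes qd: "qdim_gt (gps_supp (gcoeff S)) n"
  shows "infinite (derived_orders k S) \<or> n < card (derived_orders k S)"
proof -
  let ?X = "derived_orders k S"
  obtain N where N: "N \<subseteq> ?X" and span: "gps_supp (gcoeff S) \<subseteq> qspace.span (insert (op_shift k) N)"
    and nonzero: "\<forall>\<mu>\<in>N. gcoeff S \<mu> \<noteq> 0 \<and> \<mu> \<noteq> 0"
    using derived_orders_spanning_subset[of k S] by blast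
  show ?thesis
  proof (cases "finite N")
    case False
    then show ?thesis using N infinite_super by blast
  next
    case fin: True
    have "\<exists>D \<subseteq> ?X. finite D \<and> n < card D"
    proof (cases "k = Deriv")
      case False
      then have "gps_supp (gcoeff S) \<subseteq> qspace.span N"
        using span by (cases k) (simp_all add: op_shift_def qspace.span_insert_0)
      then show ?thesis using qdim_gt_imp_card_gt[OF qd _ fin] N fin by blast
    next
      case Deriv: True
      have "n < card (insert (op_shift k) N)"
        using qdim_gt_imp_card_gt[OF qd span] fin by simp
      then have "n \<le> card N" using fin by (auto simp: card_insert_if split: if_splits)
      obtain b where "gcoeff S b \<noteq> 0" "b \<noteq> 0" using qdim_gt_ex_nonzero[OF qd] by auto
      then obtain \<nu> where "\<nu> \<in> derived_orders Deriv S"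
        and below: "\<forall>\<mu>. gcoeff S \<mu> \<noteq> 0 \<longrightarrow> \<mu> \<noteq> 0 \<longrightarrow> \<nu> < \<mu>"
        using derived_order_Deriv_below by blast
      moreover have "\<nu> \<notin> N" using below nonzero by fastforce
      ultimately show ?thesis
        using N Deriv fin \<open>n \<le> card N\<close> by (intro exI[of _ "insert \<nu> N"]) auto
    qed
    then obtain D where "D \<subseteq> ?X" "n < card D" by blast
    then show ?thesis using card_mono[of ?X D] by (cases "finite ?X") auto
  qed
qed

lemma ex_op_derivation_nonsolution:
  assumes adm: "admissible_op k" and qd: "qdim_gt (gps_supp (gcoeff S)) n"
    and a: "\<exists>j<Suc n. a j \<noteq> 0"
  shows "\<exists>\<delta>. op_derivation \<delta> k \<and> (\<Sum>j<Suc n. a j * (gop k ^^ j) (\<delta> S)) \<noteq> 0"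
proof (rule ccontr)
  let ?Z = "{\<mu>. \<exists>g. gorder_at g \<mu> \<and> (\<Sum>j<Suc n. a j * (gop k ^^ j) g) = 0}"
  assume "\<not> ?thesis"
  then have "derived_orders k S \<subseteq> ?Z" by (auto simp: derived_orders_def)
  moreover have "finite ?Z \<and> card ?Z \<le> n" by (rule solution_orders_bound[OF adm a])
  ultimately show False
    using derived_orders_large[OF qd, of k] by (meson card_mono finite_subset le_trans not_le)
qed

lemma is_poly_order_pderiv:
  assumes "is_poly_order n P" "j < Suc n"
  shows "is_poly_order n (poly_pderiv n j P)"
proof -
  have sub: "{\<beta>. poly_pderiv n j P \<beta> \<noteq> 0} \<subseteq> (\<lambda>\<alpha>. \<alpha>[j := \<alpha> ! j - 1]) ` {\<alpha>. P \<alpha> \<noteq> 0}"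
  proof
    fix \<beta> assume "\<beta> \<in> {\<beta>. poly_pderiv n j P \<beta> \<noteq> 0}"
    then have "length \<beta> = Suc n" "P (\<beta>[j := \<beta> ! j + 1]) \<noteq> 0"
      by (auto simp: poly_pderiv_def split: if_splits)
    then show "\<beta> \<in> (\<lambda>\<alpha>. \<alpha>[j := \<alpha> ! j - 1]) ` {\<alpha>. P \<alpha> \<noteq> 0}"
      using assms(2) by (intro image_eqI[of _ _ "\<beta>[j := \<beta> ! j + 1]"]) auto
  qed
  have "finite {\<alpha>. P \<alpha> \<noteq> 0}" using assms(1) by (simp add: is_poly_order_def)
  then have "finite {\<beta>. poly_pderiv n j P \<beta> \<noteq> 0}" by (rule finite_subset[OF sub finite_imageI])
  then show ?thesis unfolding is_poly_order_def by (simp add: poly_pderiv_def)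
qed

lemma poly_pderiv_lower_nonzero:
  assumes "P \<alpha> \<noteq> 0" "length \<alpha> = Suc n" "j < Suc n" "\<alpha> ! j \<noteq> 0"
  shows "poly_pderiv n j P (\<alpha>[j := \<alpha> ! j - 1]) \<noteq> 0"
  using assms by (simp add: poly_pderiv_def)

lemma poly_pderiv_nonzero_degree:
  assumes "poly_pderiv n j P \<beta> \<noteq> 0" "j < Suc n"
  shows "P (\<beta>[j := \<beta> ! j + 1]) \<noteq> 0 \<and> sum_list (\<beta>[j := \<beta> ! j + 1]) = Suc (sum_list \<beta>)"
  using assms by (auto simp: poly_pderiv_def sum_list_update split: if_splits)

lemma geval_constant_nonzero:
  assumes "is_poly_order n P" "P \<alpha>0 \<noteq> 0" "\<And>\<alpha> j. P \<alpha> \<noteq> 0 \<Longrightarrow> j < Suc n \<Longrightarrow> \<alpha> ! j = 0"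
  shows "geval k P S \<noteq> 0"
proof -
  have zero: "\<alpha> = replicate (Suc n) 0" if "P \<alpha> \<noteq> 0" for \<alpha>
    using that assms(1,3) by (auto simp: is_poly_order_def list_eq_iff_nth_eq simp del: replicate_Suc)
  then have "{\<alpha>. P \<alpha> \<noteq> 0} = {\<alpha>0}" using assms(2) by blast
  moreover have "gmonomial k S \<alpha>0 = 1"
    unfolding zero[OF assms(2)] gmonomial_def by (rule prod.neutral) (simp del: replicate_Suc)
  ultimately show ?thesis using assms(2) by (simp add: geval_def)
qed

lemma geval_nonzero:
  assumes adm: "admissible_op k" and qd: "qdim_gt (gps_supp (gcoeff S)) n"
  shows "is_poly_order n P \<Longrightarrow> P \<alpha>0 \<noteq> 0 \<Longrightarrow> \<forall>\<alpha>. P \<alpha> \<noteq> 0 \<longrightarrow> sum_list \<alpha> \<le> d \<Longrightarrow> geval k P S \<noteq> 0"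
proof (induction d arbitrary: P \<alpha>0 rule: less_induct)
  case (less d)
  show ?case
  proof (cases "\<exists>\<alpha> j. P \<alpha> \<noteq> 0 \<and> j < Suc n \<and> \<alpha> ! j \<noteq> 0")
    case False
    then show ?thesis using geval_constant_nonzero[OF less.prems(1,2)] by blast
  next
    case True
    then obtain \<alpha> j where \<alpha>: "P \<alpha> \<noteq> 0" "j < Suc n" "\<alpha> ! j \<noteq> 0" by blast
    have len: "length \<alpha> = Suc n" using \<alpha>(1) less.prems(1) by (simp add: is_poly_order_def)
    have "\<alpha> ! j \<le> sum_list \<alpha>" using \<alpha>(2) len by (simp add: elem_le_sum_list)
    moreover have "sum_list \<alpha> \<le> d" using \<alpha>(1) less.prems(3) by blast
    ultimately have "d - 1 < d" using \<alpha>(3) by linarith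
    have "sum_list \<beta> \<le> d - 1" if "poly_pderiv n j P \<beta> \<noteq> 0" for \<beta>
    proof -
      have "Suc (sum_list \<beta>) \<le> d"
        using poly_pderiv_nonzero_degree[OF that \<alpha>(2)] less.prems(3) by metis
      then show ?thesis by linarith
    qed
    then have "geval k (poly_pderiv n j P) S \<noteq> 0"
      using less.IH[OF \<open>d - 1 < d\<close> is_poly_order_pderiv[OF less.prems(1) \<alpha>(2)]
          poly_pderiv_lower_nonzero[where P = P, OF \<alpha>(1) len \<alpha>(2,3)]] by blast
    then obtain \<delta> where \<delta>: "op_derivation \<delta> k"
      and "(\<Sum>j<Suc n. geval k (poly_pderiv n j P) S * (gop k ^^ j) (\<delta> S)) \<noteq> 0"
      using ex_op_derivation_nonsolution[OF adm qd, where a = "\<lambda>j. geval k (poly_pderiv n j P) S"] \<alpha>(2)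
      by blast
    then have "\<delta> (geval k P S) \<noteq> 0"
      by (simp add: op_derivation.geval_chain_rule[OF \<delta> less.prems(1)])
    then show ?thesis
      using ring_derivation.map_zero[OF op_derivation.axioms(1)[OF \<delta>]] by auto
  qed
qed

theorem corollary2:
  fixes s :: gps and n :: nat and k :: opkind and P :: "nat list \<Rightarrow> complex"
  assumes "is_gps s"
    and "admissible_op k"
    and "qdim_gt (gps_supp s) n"
    and "is_poly_order n P"
    and "\<exists>\<alpha>. P \<alpha> \<noteq> 0"
  shows "gps_eval k P s \<noteq> (\<lambda>_. 0)"
proof -
  define S where "S = Abs_gser s"
  have s: "gcoeff S = s" using assms(1) by (simp add: S_def Abs_gser_inverse)
  obtain \<alpha>0 where "P \<alpha>0 \<noteq> 0" using assms(5) by blast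
  have fin: "finite {\<alpha>. P \<alpha> \<noteq> 0}" using assms(4) by (simp add: is_poly_order_def)
  then have "\<forall>\<alpha>. P \<alpha> \<noteq> 0 \<longrightarrow> sum_list \<alpha> \<le> Max (sum_list ` {\<alpha>. P \<alpha> \<noteq> 0})" by simp
  then have "geval k P S \<noteq> 0"
    using geval_nonzero[OF assms(2)] assms(3,4) \<open>P \<alpha>0 \<noteq> 0\<close> by (simp add: s)
  then show ?thesis
    by (simp add: gps_eval_gcoeff[OF fin, of k S, unfolded s] gser_eq_iff fun_eq_iff)
qed

end
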